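(* Let $n\ge1$. For every $0\le i<n$, $|\mathrm{I}A^2_{n,i}|=|\mathrm{I}B^2_{n,i}|$.
   Context: Fix $n\ge1$. $\mathrm{SBC}(n,0)=0$, $\mathrm{SBC}(n,i)=\sum_{j=0}^{i-1}\binom{n}{j}$ for $1\le i\le n+1$. For $0\le k<2^n$, $\mathrm{IStep}(n,k)$ is the unique $i\in\{0,\ldots,n\}$ with $\mathrm{SBC}(n,i)\le k<\mathrm{SBC}(n,i+1)$; $\mathrm{Weight}(k)$ is the number of 1's in the binary representation of $k$. For $0\le i\le n$: $\mathrm{I}A_{n,i}=\{k<2^n:\mathrm{IStep}(n,k)=i\}$, $\mathrm{I}B_{n,i}=\{k<2^n:\mathrm{Weight}(k)=i\}$, $\mathrm{I}A^1_{n,i}=\mathrm{I}A_{n,i}\setminus\mathrm{I}B_{n,i}$, $\mathrm{I}B^1_{n,i}=\mathrm{I}B_{n,i}\setminus\mathrm{I}A_{n,i}$. For $0\le i,j\le n$ with $i\ne j$: $\mathrm{I}C^1_{n,i,j}=\mathrm{I}A^1_{n,i}\cap\mathrm{I}B^1_{n,j}$, $\gamma^1_{n,i,j}=|\mathrm{I}C^1_{n,i,j}|$, and $\mathrm{I}\overline{C}^1_{n,i,j}$ is: all of $\mathrm{I}C^1_{n,i,j}$ if $\gamma^1_{n,i,j}\le\gamma^1_{n,j,i}$; the $\gamma^1_{n,j,i}$ smallest elements of $\mathrm{I}C^1_{n,i,j}$ if $\gamma^1_{n,i,j}>\gamma^1_{n,j,i}$ and $i>j$; the $\gamma^1_{n,j,i}$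 largest elements of $\mathrm{I}C^1_{n,i,j}$ if $\gamma^1_{n,i,j}>\gamma^1_{n,j,i}$ and $i<j$. Finally $\mathrm{I}A^2_{n,i}=\mathrm{I}A^1_{n,i}\setminus\bigcup_{j\ne i}\mathrm{I}\overline{C}^1_{n,i,j}$ and $\mathrm{I}B^2_{n,i}=\mathrm{I}B^1_{n,i}\setminus\bigcup_{j\ne i}\mathrm{I}\overline{C}^1_{n,j,i}$, where $j$ ranges over $\{0,\ldots,n\}\setminus\{i\}$. *)

theory Defs
  imports Main
begin

definition SBC :: "nat \<Rightarrow> nat \<Rightarrow> nat" where
  "SBC n i = (\<Sum>j<i. n choose j)"

definition IStep :: "nat \<Rightarrow> nat \<Rightarrow> nat" where
  "IStep n k = (THE i. i \<le> n \<and> SBC n i \<le> k \<and> k < SBC n (i + 1))"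

fun Weight :: "nat \<Rightarrow> nat" where
  "Weight k = (if k = 0 then 0 else k mod 2 + Weight (k div 2))"

definition IA :: "nat \<Rightarrow> nat \<Rightarrow> nat set" where
  "IA n i = {k. k < 2 ^ n \<and> IStep n k = i}"

definition IB :: "nat \<Rightarrow> nat \<Rightarrow> nat set" where
  "IB n i = {k. k < 2 ^ n \<and> Weight k = i}"

definition IA1 :: "nat \<Rightarrow> nat \<Rightarrow> nat set" where
  "IA1 n i = IA n i - IB n i"

definition IB1 :: "nat \<Rightarrow> nat \<Rightarrow> nat set" where
  "IB1 n i = IB n i - IA n i"

definition IC1 :: "nat \<Rightarrow> nat \<Rightarrow> nat \<Rightarrow> nat set" where
  "IC1 n i j = IA1 n i \<inter> IB1 n j"

definition gamma1 :: "nat \<Rightarrow> nat \<Rightarrow> nat \<Rightarrow> nat" where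
  "gamma1 n i j = card (IC1 n i j)"

definition smallest :: "nat \<Rightarrow> nat set \<Rightarrow> nat set" where
  "smallest m S = {x \<in> S. card {y \<in> S. y < x} < m}"

definition largest :: "nat \<Rightarrow> nat set \<Rightarrow> nat set" where
  "largest m S = {x \<in> S. card {y \<in> S. x < y} < m}"

definition ICbar1 :: "nat \<Rightarrow> nat \<Rightarrow> nat \<Rightarrow> nat set" where
  "ICbar1 n i j =
     (if gamma1 n i j \<le> gamma1 n j i then IC1 n i j
      else if j < i then smallest (gamma1 n j i) (IC1 n i j)
      else largest (gamma1 n j i) (IC1 n i j))"

definition IA2 :: "nat \<Rightarrow> nat \<Rightarrow> nat set" where
  "IA2 n i = IA1 n i - (\<Union>j \<in> {0..n} - {i}. ICbar1 n i j)"

definition IB2 :: "nat \<Rightarrow> nat \<Rightarrow> nat set" where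
  "IB2 n i = IB1 n i - (\<Union>j \<in> {0..n} - {i}. ICbar1 n j i)"

end

theory Submission
  imports Defs
begin

text \<open>Both IA and IB partition the numbers below \<open>2^n\<close> into classes of sizes \<open>n choose i\<close>:
  IA into consecutive intervals by construction, IB by counting binary words of weight \<open>i\<close>.
  Hence IA1 and IB1 (each class minus their common part) have equal sizes as well. IA2 removes
  from IA1 the disjoint pieces \<open>ICbar1 n i j\<close> (disjoint because they lie in different weight
  classes), IB2 removes from IB1 the disjoint pieces \<open>ICbar1 n j i\<close> (disjoint because they lie in
  different step classes), and both pieces have size \<open>min (gamma1 n i j) (gamma1 n j i)\<close>.\<close>

declare Weight.simps [simp del]

lemma Weight_double [simp]: "Weight (2 * k) = Weight k"
  by (cases "k = 0") (simp_all add: Weight.simps[of "2 * k"])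

lemma Weight_Suc_double [simp]: "Weight (Suc (2 * k)) = Suc (Weight k)"
  by (subst Weight.simps) simp

lemma card_below_two_power_Suc:
  "card {k::nat. k < 2 ^ Suc n \<and> P k} =
     card {k. k < 2 ^ n \<and> P (2 * k)} + card {k. k < 2 ^ n \<and> P (2 * k + 1)}"
proof -
  let ?E = "{k. k < 2 ^ n \<and> P (2 * k)}" and ?O = "{k. k < 2 ^ n \<and> P (2 * k + 1)}"
  have split: "{k. k < 2 ^ Suc n \<and> P k} = (\<lambda>k. 2 * k) ` ?E \<union> (\<lambda>k. 2 * k + 1) ` ?O"
  proof (intro set_eqI iffI)
    fix k assume k: "k \<in> {k. k < 2 ^ Suc n \<and> P k}"
    have "k div 2 < 2 ^ n" using k by auto
    moreover have "k = 2 * (k div 2) \<or> k = 2 * (k div 2) + 1" by auto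
    ultimately show "k \<in> (\<lambda>k. 2 * k) ` ?E \<union> (\<lambda>k. 2 * k + 1) ` ?O"
      using k by (metis (mono_tags, lifting) UnI1 UnI2 image_eqI mem_Collect_eq)
  qed auto
  have finite: "finite ((\<lambda>k. 2 * k) ` ?E)" "finite ((\<lambda>k. 2 * k + 1) ` ?O)"
    by auto
  have disjoint: "(\<lambda>k. 2 * k) ` ?E \<inter> (\<lambda>k. 2 * k + 1) ` ?O = {}"
    by auto presburger
  have "inj_on (\<lambda>k::nat. 2 * k) ?E" "inj_on (\<lambda>k::nat. 2 * k + 1) ?O"
    by (auto simp: inj_on_def)
  then show ?thesis
    unfolding split card_Un_disjoint[OF finite disjoint] by (simp add: card_image)
qed

lemma card_IB: "card (IB n i) = n choose i"
  unfolding IB_def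
proof (induction n arbitrary: i)
  case 0
  have "{k. k < (2::nat) ^ 0 \<and> Weight k = i} = (if i = 0 then {0} else {})"
    by (auto simp: Weight.simps)
  then show ?case by simp
next
  case (Suc n)
  show ?case
    unfolding card_below_two_power_Suc using Suc.IH by (cases i) simp_all
qed

lemma SBC_mono: "a \<le> b \<Longrightarrow> SBC n a \<le> SBC n b"
  unfolding SBC_def by (rule sum_mono2) auto

lemma SBC_Suc: "SBC n (Suc i) = SBC n i + (n choose i)"
  unfolding SBC_def by simp

lemma SBC_Suc_self: "SBC n (Suc n) = 2 ^ n"
  unfolding SBC_def by (simp add: lessThan_Suc_atMost choose_row_sum)

lemma IStep_eqI:
  assumes "j \<le> n" "SBC n j \<le> k" "k < SBC n (Suc j)"
  shows "IStep n k = j"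
  unfolding IStep_def
proof (rule the_equality)
  fix j' assume "j' \<le> n \<and> SBC n j' \<le> k \<and> k < SBC n (j' + 1)"
  then have j': "SBC n j' \<le> k" "k < SBC n (Suc j')" by simp_all
  have False if "j < j'"
    using SBC_mono[of "Suc j" j' n] that j' assms by linarith
  moreover have False if "j' < j"
    using SBC_mono[of "Suc j'" j n] that j' assms by linarith
  ultimately show "j' = j" by (meson linorder_neqE_nat)
qed (use assms in auto)

lemma IStep_bounds:
  assumes "k < 2 ^ n"
  shows "IStep n k \<le> n \<and> SBC n (IStep n k) \<le> k \<and> k < SBC n (Suc (IStep n k))"
proof -
  define j where "j = (LEAST j. k < SBC n (Suc j))"
  have top: "k < SBC n (Suc n)" using assms by (simp add: SBC_Suc_self)
  have "k < SBC n (Suc j)" unfolding j_def using top by (rule LeastI)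
  moreover have "j \<le> n" unfolding j_def using top by (rule Least_le)
  moreover have "SBC n j \<le> k"
  proof (cases j)
    case (Suc j')
    then have "\<not> k < SBC n (Suc j')" unfolding j_def by (intro not_less_Least) simp
    then show ?thesis using Suc by simp
  qed (simp add: SBC_def)
  ultimately show ?thesis using IStep_eqI by simp
qed

lemma IA_eq_interval: "i \<le> n \<Longrightarrow> IA n i = {SBC n i ..< SBC n (Suc i)}"
proof (intro set_eqI iffI)
  fix k assume "k \<in> IA n i"
  then show "k \<in> {SBC n i ..< SBC n (Suc i)}"
    using IStep_bounds[of k n] by (auto simp: IA_def)
next
  fix k assume i: "i \<le> n" and k: "k \<in> {SBC n i ..< SBC n (Suc i)}"
  have "k < 2 ^ n"
    using k SBC_mono[of "Suc i" "Suc n" n] i by (simp add: SBC_Suc_self)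
  with IStep_eqI[of i n k] i k show "k \<in> IA n i" by (simp add: IA_def)
qed

lemma card_IA: "i \<le> n \<Longrightarrow> card (IA n i) = n choose i"
  by (simp add: IA_eq_interval SBC_Suc)

lemma finite_IA [simp]: "finite (IA n i)"
  by (rule finite_subset[of _ "{..<2 ^ n}"]) (auto simp: IA_def)

lemma finite_IB [simp]: "finite (IB n i)"
  by (rule finite_subset[of _ "{..<2 ^ n}"]) (auto simp: IB_def)

lemma card_IA1_eq_card_IB1: "i \<le> n \<Longrightarrow> card (IA1 n i) = card (IB1 n i)"
  unfolding IA1_def IB1_def
  by (simp add: card_Diff_subset_Int card_IA card_IB Int_commute)

lemma card_filter_rank_less:
  assumes "finite S" "inj_on f S" "f ` S \<subseteq> {..<card S}" "m \<le> card S"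
  shows "card {x \<in> S. f x < m} = m"
proof -
  have "f ` S = {..<card S}"
    using assms by (intro card_subset_eq) (auto simp: card_image)
  then have "{..<m} \<subseteq> f ` S"
    using assms(4) by auto
  then have "f ` {x \<in> S. f x < m} = {..<m}"
    by auto
  moreover have "inj_on f {x \<in> S. f x < m}"
    using assms(2) by (rule inj_on_subset) auto
  ultimately show ?thesis
    by (metis card_image card_lessThan)
qed

lemma card_smallest:
  fixes S :: "nat set"
  assumes "finite S" "m \<le> card S"
  shows "card (smallest m S) = m"
proof -
  let ?rank = "\<lambda>x. card {y \<in> S. y < x}"
  have "?rank x < ?rank x'" if "x \<in> S" "x < x'" for x x'
    using that \<open>finite S\<close> by (intro psubset_card_mono) auto
  then have "inj_on ?rank S"
    by (metis (no_types, lifting) inj_onI less_irrefl nat_neq_iff)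
  moreover have "?rank ` S \<subseteq> {..<card S}"
    using \<open>finite S\<close> by (auto intro!: psubset_card_mono)
  ultimately show ?thesis
    unfolding smallest_def using card_filter_rank_less assms by blast
qed

lemma card_largest:
  fixes S :: "nat set"
  assumes "finite S" "m \<le> card S"
  shows "card (largest m S) = m"
proof -
  let ?rank = "\<lambda>x. card {y \<in> S. x < y}"
  have "?rank x' < ?rank x" if "x' \<in> S" "x < x'" for x x'
    using that \<open>finite S\<close> by (intro psubset_card_mono) auto
  then have "inj_on ?rank S"
    by (metis (no_types, lifting) inj_onI less_irrefl nat_neq_iff)
  moreover have "?rank ` S \<subseteq> {..<card S}"
    using \<open>finite S\<close> by (auto intro!: psubset_card_mono)
  ultimately show ?thesis
    unfolding largest_def using card_filter_rank_less assms by blast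
qed

lemma ICbar1_subset: "ICbar1 n i j \<subseteq> IC1 n i j"
  unfolding ICbar1_def smallest_def largest_def by auto

lemma finite_ICbar1 [simp]: "finite (ICbar1 n i j)"
  by (rule finite_subset[OF ICbar1_subset]) (simp add: IC1_def IA1_def)

lemma card_ICbar1: "card (ICbar1 n i j) = min (gamma1 n i j) (gamma1 n j i)"
  using card_smallest[of "IC1 n i j" "gamma1 n j i"] card_largest[of "IC1 n i j" "gamma1 n j i"]
  by (auto simp: ICbar1_def gamma1_def IC1_def IA1_def)

lemma card_IA2:
  "card (IA2 n i) = card (IA1 n i) - (\<Sum>j \<in> {0..n} - {i}. min (gamma1 n i j) (gamma1 n j i))"
proof -
  let ?U = "\<Union>j \<in> {0..n} - {i}. ICbar1 n i j"
  have pieces: "ICbar1 n i j \<subseteq> IA1 n i \<inter> IB n j" for j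
    using ICbar1_subset by (fastforce simp: IC1_def IB1_def)
  then have "Weight x = j" if "x \<in> ICbar1 n i j" for x j
    using that by (auto simp: IB_def)
  then have "card ?U = (\<Sum>j \<in> {0..n} - {i}. card (ICbar1 n i j))"
    by (intro card_UN_disjoint) auto
  moreover have "?U \<subseteq> IA1 n i" using pieces by blast
  ultimately show ?thesis
    unfolding IA2_def by (simp add: card_Diff_subset finite_subset card_ICbar1)
qed

lemma card_IB2:
  "card (IB2 n i) = card (IB1 n i) - (\<Sum>j \<in> {0..n} - {i}. min (gamma1 n j i) (gamma1 n i j))"
proof -
  let ?V = "\<Union>j \<in> {0..n} - {i}. ICbar1 n j i"
  have pieces: "ICbar1 n j i \<subseteq> IB1 n i \<inter> IA n j" for j
    using ICbar1_subset by (fastforce simp: IC1_def IA1_def)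
  then have "IStep n x = j" if "x \<in> ICbar1 n j i" for x j
    using that by (auto simp: IA_def)
  then have "card ?V = (\<Sum>j \<in> {0..n} - {i}. card (ICbar1 n j i))"
    by (intro card_UN_disjoint) auto
  moreover have "?V \<subseteq> IB1 n i" using pieces by blast
  ultimately show ?thesis
    unfolding IB2_def by (simp add: card_Diff_subset finite_subset card_ICbar1)
qed

theorem proposition5:
  fixes n i :: nat
  assumes "n \<ge> 1" and "i < n"
  shows "card (IA2 n i) = card (IB2 n i)"
  using card_IA1_eq_card_IB1[of i n] assms(2)
  by (simp add: card_IA2 card_IB2 min.commute)

end
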